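(* For every $k\ge1$, a transduction $f:\Sigma^*\rightharpoonup\Gamma^*$ is $k$-lexicographic (i.e. belongs to $\mathsf{Lex}_k$) if and only if it is $k$-lexicographic automatic.
   Context: Alphabets are finite. For words $u,v$ of equal length over alphabets $\Sigma_1,\Sigma_2$, $u\otimes v$ is the word over $\Sigma_1\times\Sigma_2$ with $(u\otimes v)[i]=(u[i],v[i])$. A transduction is a partial function $f:\Sigma^*\rightharpoonup\Gamma^*$. A simple transduction is a transduction $f=\sum_{i=1}^n L_i\triangleright w_i$, where $L_1,\dots,L_n\subseteq\Sigma^*$ are pairwise disjoint regular languages and each $w_i\in\Gamma^{\le 1}$ is a word of length at most 1. It satisfies $f(u)=w_i$ if $u\in L_i$, and $f(u)$ is undefined if $u\notin\bigcup_iL_i$. An ordered alphabet is a pair $\lambda=(B,\prec)$ with $B$ a finite set and $\prec$ a strict linear order on $B$. The order is extended to $B^n$ for each $n$ by: $u\prec v$ iff there is $i\le n$ with $u[i]\prec v[i]$ and $u[j]=v[j]$ for all $i<j\le n$ (most significant letter on the right). For a transduction $f:(\Sigma\times B)^*\rightharpoonup\Gamma^*$, the transduction $\mathsf{maplex}_\lambda f:\Sigma^*\rightharpoonup\Gamma^*$ maps $u$ to $f(u\otimes b_1)f(u\otimes b_2)\cdots f(u\otimes b_m)$, where $b_1\prec\cdots\prec b_m$ is the increasing enumeration of all of $B^{|u|}$. It is defined on $u$ iff every $f(u\otimes b_j)$ is defined. The classes are defined inductively: - $\mathsf{Lex}_0$ is the class of simple transductions; - $\mathsf{Lex}_{k+1}=\{\mathsf{maplex}_\lambda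 f: \lambda=(B,\prec)\text{ an ordered alphabet},\ f:(\Sigma\times B)^*\rightharpoonup\Gamma^*\text{ in }\mathsf{Lex}_k\}$; - $\mathsf{Lex}=\bigcup_k\mathsf{Lex}_k$, the lexicographic transductions. Elements of $\mathsf{Lex}_k$ are called $k$-lexicographic. A $k$-lexicographic automatic transducer from $\Sigma^*$ to $\Gamma^*$ consists of: - ordered alphabets $\lambda_i=(B_i,\prec_i)$, $1\le i\le k$, with $B=B_1\times\cdots\times B_k$; - finite automata $A_{dom}$ over $\Sigma$, $A_{univ}$ over $\Sigma\times B$, and $A_\gamma$ over $\Sigma\times B$ for each $\gamma\in\Gamma$. These must satisfy: for every $u\in L(A_{dom})$ and every $x$ with $u\otimes x\in L(A_{univ})$, exactly one $\gamma$ has $u\otimes x\in L(A_\gamma)$. For $x=x_1\otimes\cdots\otimes x_k$ and $y=y_1\otimes\cdots\otimes y_k$ with $x_i,y_i\in B_i^n$, let $x\prec_{\bar\lambda}y$ iff there is $i$ with $x_i\prec_i y_i$ (in the lexicographic extension) and $x_j=y_j$ for all $j<i$. On $u\in L(A_{dom})$, the output is the word whose positions are the elements of $V=\{x\in B^{|u|}: u\otimes x\in L(A_{univ})\}$ in increasing $\prec_{\bar\lambda}$-order, position $x$ carrying the label $\gamma$ with $u\otimes x\in L(A_\gamma)$. The output is undefined if $u\notin L(A_{dom})$. A transduction is $k$-lexicographic automatic if it is defined by such a transducer. *)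

theory Defs
  imports Main
begin

definition nfa_reach :: "(nat \<Rightarrow> 'c \<Rightarrow> nat set) \<Rightarrow> nat set \<Rightarrow> 'c list \<Rightarrow> nat set" where
  "nfa_reach d S w = foldl (\<lambda>S a. \<Union>q\<in>S. d q a) S w"

definition nfa_lang ::
  "'c set \<Rightarrow> nat set \<Rightarrow> nat set \<Rightarrow> (nat \<Rightarrow> 'c \<Rightarrow> nat set) \<Rightarrow> nat set \<Rightarrow> 'c list set" where
  "nfa_lang A Q I d F = {w \<in> lists A. nfa_reach d I w \<inter> F \<noteq> {}}"

definition is_nfa :: "'c set \<Rightarrow> nat set \<Rightarrow> nat set \<Rightarrow> (nat \<Rightarrow> 'c \<Rightarrow> nat set) \<Rightarrow> nat set \<Rightarrow> bool" where
  "is_nfa A Q I d F \<longleftrightarrow> finite Q \<and> I \<subseteq> Q \<and> F \<subseteq> Q \<and> (\<forall>q\<in>Q. \<forall>a\<in>A. d q a \<subseteq> Q)"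

definition regular_on :: "'c set \<Rightarrow> 'c list set \<Rightarrow> bool" where
  "regular_on A L \<longleftrightarrow> (\<exists>Q I d F. is_nfa A Q I d F \<and> L = nfa_lang A Q I d F)"

text \<open>An ordered alphabet (B, r): a finite set B (of naturals; every finite set is in bijection
  with such a set) with a strict linear order r on B.\<close>
definition ordered_alphabet :: "nat set \<Rightarrow> (nat \<Rightarrow> nat \<Rightarrow> bool) \<Rightarrow> bool" where
  "ordered_alphabet B r \<longleftrightarrow> finite B \<and> (\<forall>x\<in>B. \<not> r x x)
     \<and> (\<forall>x\<in>B. \<forall>y\<in>B. \<forall>z\<in>B. r x y \<longrightarrow> r y z \<longrightarrow> r x z)
     \<and> (\<forall>x\<in>B. \<forall>y\<in>B. x \<noteq> y \<longrightarrow> r x y \<or> r y x)"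

text \<open>Extension to B^n, most significant letter on the right (0-based positions).\<close>
definition lexr :: "(nat \<Rightarrow> nat \<Rightarrow> bool) \<Rightarrow> nat list \<Rightarrow> nat list \<Rightarrow> bool" where
  "lexr r x y \<longleftrightarrow> (\<exists>i < length x. r (x ! i) (y ! i) \<and> (\<forall>j. i < j \<and> j < length x \<longrightarrow> x ! j = y ! j))"

definition words_of_len :: "'b set \<Rightarrow> nat \<Rightarrow> 'b list set" where
  "words_of_len B n = {x \<in> lists B. length x = n}"

definition sorted_enum :: "('x \<Rightarrow> 'x \<Rightarrow> bool) \<Rightarrow> 'x set \<Rightarrow> 'x list" where
  "sorted_enum R V = (THE xs. set xs = V \<and> sorted_wrt R xs)"

text \<open>Letters of the alphabet \<Sigma> \<times> B_1 \<times> ... \<times> B_j are encoded as pairs (\<sigma>, [b_1,...,b_j]).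
  Transductions are partial functions, encoded with option; only their values on words over
  the relevant alphabet A matter.\<close>

definition ext_alph :: "('a \<times> nat list) set \<Rightarrow> nat set \<Rightarrow> ('a \<times> nat list) set" where
  "ext_alph A B = {(a, bs @ [b]) | a bs b. (a, bs) \<in> A \<and> b \<in> B}"

text \<open>u \<otimes> x, for u over \<Sigma> \<times> B_1 \<times> ... \<times> B_j and x over B_{j+1}.\<close>
definition comb :: "('a \<times> nat list) list \<Rightarrow> nat list \<Rightarrow> ('a \<times> nat list) list" where
  "comb u x = map (\<lambda>((a, bs), b). (a, bs @ [b])) (zip u x)"

definition maplex :: "nat set \<Rightarrow> (nat \<Rightarrow> nat \<Rightarrow> bool)
    \<Rightarrow> (('a \<times> nat list) list \<Rightarrow> 'g list option) \<Rightarrow> ('a \<times> nat list) list \<Rightarrow> 'g list option" where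
  "maplex B r g u =
     (let xs = sorted_enum (lexr r) (words_of_len B (length u)) in
      if (\<forall>x\<in>set xs. g (comb u x) \<noteq> None)
      then Some (concat (map (\<lambda>x. the (g (comb u x))) xs)) else None)"

definition simple_trans :: "'c set \<Rightarrow> ('c list \<Rightarrow> 'g list option) \<Rightarrow> bool" where
  "simple_trans A f \<longleftrightarrow> (\<exists>(n::nat) (L :: nat \<Rightarrow> 'c list set) (w :: nat \<Rightarrow> 'g list).
      (\<forall>i<n. regular_on A (L i) \<and> length (w i) \<le> 1)
    \<and> (\<forall>i<n. \<forall>j<n. i \<noteq> j \<longrightarrow> L i \<inter> L j = {})
    \<and> (\<forall>i<n. \<forall>u\<in>L i. f u = Some (w i))
    \<and> (\<forall>u\<in>lists A. (\<forall>i<n. u \<notin> L i) \<longrightarrow> f u = None))"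

primrec LexG :: "nat \<Rightarrow> ('a \<times> nat list) set \<Rightarrow> (('a \<times> nat list) list \<Rightarrow> 'g list option) \<Rightarrow> bool" where
  "LexG 0 A f = simple_trans A f"
| "LexG (Suc k) A f = (\<exists>B r g. ordered_alphabet B r \<and> LexG k (ext_alph A B) g
       \<and> (\<forall>u\<in>lists A. f u = maplex B r g u))"

definition base_alph :: "('a \<times> nat list) set" where
  "base_alph = {(a, []) | a. True}"

definition Lex :: "nat \<Rightarrow> ('a list \<Rightarrow> 'g list option) \<Rightarrow> bool" where
  "Lex k f \<longleftrightarrow> LexG k base_alph (\<lambda>w. f (map fst w))"

text \<open>Letters of \<Sigma> \<times> B (B = B_1 \<times> ... \<times> B_k) are encoded as (\<sigma>, [b_1,...,b_k]); the ordered
  alphabets are Bs i, rs i for i < k (0-based indexing).\<close>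

definition prod_alph :: "nat \<Rightarrow> (nat \<Rightarrow> nat set) \<Rightarrow> nat list set" where
  "prod_alph k Bs = {bs. length bs = k \<and> (\<forall>i<k. bs ! i \<in> Bs i)}"

definition sig_alph :: "nat \<Rightarrow> (nat \<Rightarrow> nat set) \<Rightarrow> ('a \<times> nat list) set" where
  "sig_alph k Bs = UNIV \<times> prod_alph k Bs"

definition comp_order :: "nat \<Rightarrow> (nat \<Rightarrow> nat \<Rightarrow> nat \<Rightarrow> bool) \<Rightarrow> nat list list \<Rightarrow> nat list list \<Rightarrow> bool" where
  "comp_order k rs x y \<longleftrightarrow> (\<exists>i<k. lexr (rs i) (map (\<lambda>l. l ! i) x) (map (\<lambda>l. l ! i) y)
       \<and> (\<forall>j<i. map (\<lambda>l. l ! j) x = map (\<lambda>l. l ! j) y))"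

definition is_lex_auto_transducer ::
  "nat \<Rightarrow> (nat \<Rightarrow> nat set) \<Rightarrow> (nat \<Rightarrow> nat \<Rightarrow> nat \<Rightarrow> bool) \<Rightarrow> 'a list set
     \<Rightarrow> ('a \<times> nat list) list set \<Rightarrow> ('g \<Rightarrow> ('a \<times> nat list) list set) \<Rightarrow> bool" where
  "is_lex_auto_transducer k Bs rs Ldom Luniv Lg \<longleftrightarrow>
     (\<forall>i<k. ordered_alphabet (Bs i) (rs i))
   \<and> regular_on (UNIV :: 'a set) Ldom
   \<and> regular_on (sig_alph k Bs) Luniv
   \<and> (\<forall>\<gamma>. regular_on (sig_alph k Bs) (Lg \<gamma>))
   \<and> (\<forall>u\<in>Ldom. \<forall>x\<in>words_of_len (prod_alph k Bs) (length u).
        zip u x \<in> Luniv \<longrightarrow> (\<exists>!\<gamma>. zip u x \<in> Lg \<gamma>))"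

definition lex_auto_output ::
  "nat \<Rightarrow> (nat \<Rightarrow> nat set) \<Rightarrow> (nat \<Rightarrow> nat \<Rightarrow> nat \<Rightarrow> bool) \<Rightarrow> 'a list set
     \<Rightarrow> ('a \<times> nat list) list set \<Rightarrow> ('g \<Rightarrow> ('a \<times> nat list) list set) \<Rightarrow> 'a list \<Rightarrow> 'g list option" where
  "lex_auto_output k Bs rs Ldom Luniv Lg u =
     (if u \<in> Ldom then
        Some (map (\<lambda>x. THE \<gamma>. zip u x \<in> Lg \<gamma>)
          (sorted_enum (comp_order k rs)
             {x \<in> words_of_len (prod_alph k Bs) (length u). zip u x \<in> Luniv}))
      else None)"

definition Lex_automatic :: "nat \<Rightarrow> ('a list \<Rightarrow> 'g list option) \<Rightarrow> bool" where
  "Lex_automatic k f \<longleftrightarrow> (\<exists>Bs rs Ldom Luniv Lg.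
      is_lex_auto_transducer k Bs rs Ldom Luniv Lg \<and> f = lex_auto_output k Bs rs Ldom Luniv Lg)"

end

theory Submission
  imports Defs "HOL-Library.Nat_Bijection"
begin

text \<open>Both notions are unfolded one ordered alphabet at a time.  Generalise automatic transducers
  to input alphabets whose letters already carry tracks.  Then a (k+1)-automatic transducer over A
  is exactly maplex over its first ordered alphabet B applied to a k-automatic transducer over
  A \<times> B: the outer domain consists of the words all of whose B-extensions lie in the inner domain
  (regular by closure under projection and complement), and the componentwise order enumerates
  the positions as the concatenation, along the lexicographically sorted first tracks, of the
  enumerations of the remaining tracks.  At k = 0 both notions say that the fibres of the
  transduction are regular and its values have length at most one.\<close>

section \<open>Regular languages\<close>

lemma nfa_reach_Nil [simp]: "nfa_reach d S [] = S"
  and nfa_reach_Cons [simp]: "nfa_reach d S (a # w) = nfa_reach d (\<Union>q\<in>S. d q a) w"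
  by (simp_all add: nfa_reach_def)

lemma nfa_reach_empty [simp]: "nfa_reach d {} w = {}"
  by (induction w) auto

lemma nfa_reach_UN: "nfa_reach d (\<Union>i\<in>K. S i) w = (\<Union>i\<in>K. nfa_reach d (S i) w)"
proof (induction w arbitrary: S)
  case (Cons a w)
  have "(\<Union>q\<in>(\<Union>i\<in>K. S i). d q a) = (\<Union>i\<in>K. \<Union>q\<in>S i. d q a)" by blast
  then show ?case by (simp only: nfa_reach_Cons Cons.IH)
qed simp

lemma nfa_reach_subset:
  assumes "is_nfa A Q I d F" "S \<subseteq> Q" "w \<in> lists A"
  shows "nfa_reach d S w \<subseteq> Q"
  using assms(2,3)
proof (induction w arbitrary: S)
  case (Cons a w)
  then have "a \<in> A" "w \<in> lists A" by simp_all
  then have "(\<Union>q\<in>S. d q a) \<subseteq> Q" using assms(1) Cons.prems(1) unfolding is_nfa_def by blast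
  then show ?case using Cons.IH \<open>w \<in> lists A\<close> by simp
qed simp

lemma regular_on_subset_lists: "regular_on A L \<Longrightarrow> L \<subseteq> lists A"
  by (auto simp: regular_on_def nfa_lang_def)

lemma regular_onI:
  assumes "is_nfa A Q I d F" "L = nfa_lang A Q I d F"
  shows "regular_on A L"
  using assms unfolding regular_on_def by blast

lemma regular_on_empty: "regular_on A {}"
  by (rule regular_onI[of A "{}" "{}" "\<lambda>_ _. {}" "{}"]) (auto simp: is_nfa_def nfa_lang_def)

lemma regular_on_Nil: "regular_on A {[]}"
proof (rule regular_onI[of A "{0}" "{0}" "\<lambda>_ _. {}" "{0}"])
  have "w \<in> nfa_lang A {0} {0} (\<lambda>_ _. {}) {0} \<longleftrightarrow> w = []" for w
    by (cases w) (auto simp: nfa_lang_def)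
  then show "{[]} = nfa_lang A {0} {0} (\<lambda>_ _. {}) {0}" by blast
qed (auto simp: is_nfa_def)

lemma regular_on_subset_Nil: "L \<subseteq> {[]} \<Longrightarrow> regular_on A L"
  using regular_on_empty regular_on_Nil by (metis subset_singletonD)

text \<open>Subset construction, with sets of states encoded as naturals.\<close>

lemma regular_on_compl:
  assumes "regular_on A L"
  shows "regular_on A (lists A - L)"
proof -
  obtain Q I d F where N: "is_nfa A Q I d F" and L: "L = nfa_lang A Q I d F"
    using assms by (auto simp: regular_on_def)
  have fin: "finite S" if "S \<subseteq> Q" for S
    using N that finite_subset unfolding is_nfa_def by blast
  have step: "(\<Union>p\<in>S. d p a) \<subseteq> Q" if "S \<subseteq> Q" "a \<in> A" for S a
    using N that unfolding is_nfa_def by blast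
  define d' where "d' q a = {set_encode (\<Union>p\<in>set_decode q. d p a)}" for q a
  let ?F' = "set_encode ` {S. S \<subseteq> Q \<and> S \<inter> F = {}}"
  have reach: "nfa_reach d' {set_encode S} w = {set_encode (nfa_reach d S w)}"
    if "S \<subseteq> Q" "w \<in> lists A" for S w
    using that
  proof (induction w arbitrary: S)
    case (Cons a w)
    then show ?case using step[of S a] fin by (simp add: d'_def)
  qed simp
  have N': "is_nfa A (set_encode ` Pow Q) {set_encode I} d' ?F'"
    unfolding is_nfa_def
  proof (intro conjI ballI)
    fix q a assume "q \<in> set_encode ` Pow Q" "a \<in> A"
    then show "d' q a \<subseteq> set_encode ` Pow Q"
      using step fin unfolding d'_def by auto
  qed (use N fin in \<open>auto simp: is_nfa_def\<close>)
  have "w \<in> nfa_lang A (set_encode ` Pow Q) {set_encode I} d' ?F' \<longleftrightarrow> w \<notin> L"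
    if w: "w \<in> lists A" for w
  proof -
    have IQ: "I \<subseteq> Q" using N by (simp add: is_nfa_def)
    show ?thesis
      unfolding L nfa_lang_def using w reach[OF IQ w] nfa_reach_subset[OF N IQ w] fin
      by (auto simp: set_encode_eq)
  qed
  then have "lists A - L = nfa_lang A (set_encode ` Pow Q) {set_encode I} d' ?F'"
    by (auto simp: nfa_lang_def)
  then show ?thesis by (rule regular_onI[OF N'])
qed

text \<open>Product construction, with pairs of states encoded as naturals.\<close>

lemma regular_on_Int:
  assumes "regular_on A L1" "regular_on A L2"
  shows "regular_on A (L1 \<inter> L2)"
proof -
  obtain Q1 I1 d1 F1 where N1: "is_nfa A Q1 I1 d1 F1" and L1: "L1 = nfa_lang A Q1 I1 d1 F1"
    using assms(1) by (auto simp: regular_on_def)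
  obtain Q2 I2 d2 F2 where N2: "is_nfa A Q2 I2 d2 F2" and L2: "L2 = nfa_lang A Q2 I2 d2 F2"
    using assms(2) by (auto simp: regular_on_def)
  let ?enc = "\<lambda>X Y. prod_encode ` (X \<times> Y)"
  define d where "d s a = ?enc (d1 (fst (prod_decode s)) a) (d2 (snd (prod_decode s)) a)" for s a
  have reach: "nfa_reach d (?enc S1 S2) w = ?enc (nfa_reach d1 S1 w) (nfa_reach d2 S2 w)" for S1 S2 w
  proof (induction w arbitrary: S1 S2)
    case (Cons a w)
    have "(\<Union>q\<in>?enc S1 S2. d q a) = ?enc (\<Union>q\<in>S1. d1 q a) (\<Union>q\<in>S2. d2 q a)"
      unfolding d_def by (auto intro!: imageI)
    then show ?case using Cons by simp
  qed simp
  have N: "is_nfa A (?enc Q1 Q2) (?enc I1 I2) d (?enc F1 F2)"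
    unfolding is_nfa_def
  proof (intro conjI ballI)
    fix s a assume "s \<in> ?enc Q1 Q2" "a \<in> A"
    then obtain p q where "p \<in> Q1" "q \<in> Q2" "s = prod_encode (p, q)" by blast
    with \<open>a \<in> A\<close> have "d1 p a \<subseteq> Q1" "d2 q a \<subseteq> Q2"
      using N1 N2 unfolding is_nfa_def by blast+
    then show "d s a \<subseteq> ?enc Q1 Q2" unfolding d_def \<open>s = _\<close> by auto
  qed (use N1 N2 in \<open>auto simp: is_nfa_def\<close>)
  have "L1 \<inter> L2 = nfa_lang A (?enc Q1 Q2) (?enc I1 I2) d (?enc F1 F2)"
    unfolding L1 L2 nfa_lang_def reach
    by (auto simp: image_Int[OF inj_prod_encode, symmetric] Times_Int_Times)
  then show ?thesis by (rule regular_onI[OF N])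
qed

lemma regular_on_Diff:
  assumes "regular_on A L1" "regular_on A L2"
  shows "regular_on A (L1 - L2)"
proof -
  have "L1 - L2 = L1 \<inter> (lists A - L2)" using regular_on_subset_lists[OF assms(1)] by auto
  then show ?thesis using regular_on_Int[OF assms(1) regular_on_compl[OF assms(2)]] by simp
qed

lemma regular_on_Un:
  assumes "regular_on A L1" "regular_on A L2"
  shows "regular_on A (L1 \<union> L2)"
proof -
  have "L1 \<union> L2 = lists A - ((lists A - L1) \<inter> (lists A - L2))"
    using assms[THEN regular_on_subset_lists] by auto
  then show ?thesis
    using assms by (simp add: regular_on_compl regular_on_Int)
qed

lemma regular_on_UN:
  assumes "finite K" "\<And>i. i \<in> K \<Longrightarrow> regular_on A (L i)"
  shows "regular_on A (\<Union>i\<in>K. L i)"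
  using assms by (induction K rule: finite_induct) (simp_all add: regular_on_empty regular_on_Un)

lemma regular_on_lists: "regular_on A (lists A)"
  using regular_on_compl[OF regular_on_empty] by simp

lemma regular_on_vimage:
  assumes "regular_on A L" "h ` A' \<subseteq> A"
  shows "regular_on A' {w \<in> lists A'. map h w \<in> L}"
proof -
  obtain Q I d F where N: "is_nfa A Q I d F" and L: "L = nfa_lang A Q I d F"
    using assms(1) by (auto simp: regular_on_def)
  define d' where "d' q a = d q (h a)" for q a
  have reach: "nfa_reach d' S w = nfa_reach d S (map h w)" for S w
    by (induction w arbitrary: S) (simp_all add: d'_def)
  have "is_nfa A' Q I d' F" using N assms(2) unfolding is_nfa_def d'_def by blast
  moreover have "{w \<in> lists A'. map h w \<in> L} = nfa_lang A' Q I d' F"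
    unfolding L nfa_lang_def reach using assms(2) by (auto simp: image_subset_iff)
  ultimately show ?thesis by (simp add: regular_onI)
qed

lemma nfa_reach_map_letters:
  assumes "d' = (\<lambda>q a. \<Union>a'\<in>{a' \<in> A'. h a' = a}. d q a')"
  shows "q \<in> nfa_reach d' S v \<longleftrightarrow> (\<exists>w\<in>lists A'. map h w = v \<and> q \<in> nfa_reach d S w)"
proof (induction v arbitrary: S)
  case (Cons a v)
  let ?X = "{a' \<in> A'. h a' = a}"
  have "(\<Union>p\<in>S. d' p a) = (\<Union>a'\<in>?X. \<Union>p\<in>S. d p a')"
    unfolding assms by blast
  then have "q \<in> nfa_reach d' S (a # v) \<longleftrightarrow>
      (\<exists>w\<in>lists A'. map h w = v \<and> q \<in> nfa_reach d (\<Union>a'\<in>?X. \<Union>p\<in>S. d p a') w)"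
    by (simp only: nfa_reach_Cons Cons.IH)
  also have "\<dots> \<longleftrightarrow> (\<exists>w\<in>lists A'. map h w = v \<and> (\<exists>a'\<in>?X. q \<in> nfa_reach d S (a' # w)))"
    by (simp add: nfa_reach_UN)
  also have "\<dots> \<longleftrightarrow> (\<exists>w\<in>lists A'. map h w = a # v \<and> q \<in> nfa_reach d S w)"
  proof
    assume "\<exists>w\<in>lists A'. map h w = v \<and> (\<exists>a'\<in>?X. q \<in> nfa_reach d S (a' # w))"
    then obtain w a' where "w \<in> lists A'" "map h w = v" "a' \<in> ?X" "q \<in> nfa_reach d S (a' # w)"
      by blast
    then show "\<exists>w\<in>lists A'. map h w = a # v \<and> q \<in> nfa_reach d S w"
      by (intro bexI[of _ "a' # w"]) auto
  next
    assume "\<exists>w\<in>lists A'. map h w = a # v \<and> q \<in> nfa_reach d S w"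
    then obtain w' where w': "w' \<in> lists A'" "map h w' = a # v" "q \<in> nfa_reach d S w'"
      by (elim bexE conjE) (rule that; assumption)
    then obtain a' w where "w' = a' # w" by (cases w') simp_all
    with w' show "\<exists>w\<in>lists A'. map h w = v \<and> (\<exists>a'\<in>?X. q \<in> nfa_reach d S (a' # w))"
      by auto
  qed
  finally show ?case .
qed simp

lemma regular_on_image:
  assumes "regular_on A' L" "h ` A' \<subseteq> A"
  shows "regular_on A (map h ` L)"
proof -
  obtain Q I d F where N: "is_nfa A' Q I d F" and L: "L = nfa_lang A' Q I d F"
    using assms(1) by (auto simp: regular_on_def)
  define d' where "d' = (\<lambda>q a. \<Union>a'\<in>{a' \<in> A'. h a' = a}. d q a')"
  have "is_nfa A Q I d' F"
    unfolding is_nfa_def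
  proof (intro conjI ballI)
    fix q a assume "q \<in> Q"
    then have "\<forall>a'\<in>A'. d q a' \<subseteq> Q" using N unfolding is_nfa_def by blast
    then show "d' q a \<subseteq> Q" unfolding d'_def by blast
  qed (use N in \<open>auto simp: is_nfa_def\<close>)
  moreover have "map h ` L = nfa_lang A Q I d' F"
  proof (intro set_eqI iffI)
    fix v
    assume "v \<in> map h ` L"
    then obtain w q where w: "w \<in> lists A'" "v = map h w" and q: "q \<in> nfa_reach d I w" "q \<in> F"
      unfolding L nfa_lang_def by blast
    have "q \<in> nfa_reach d' I v"
      using nfa_reach_map_letters[OF d'_def] w q(1) by blast
    moreover have "v \<in> lists A" using assms(2) w by (auto simp: image_subset_iff)
    ultimately show "v \<in> nfa_lang A Q I d' F" using q(2) unfolding nfa_lang_def by blast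
  next
    fix v assume "v \<in> nfa_lang A Q I d' F"
    then obtain q where "q \<in> nfa_reach d' I v" "q \<in> F" unfolding nfa_lang_def by blast
    then obtain w where "w \<in> lists A'" "map h w = v" "q \<in> nfa_reach d I w" "q \<in> F"
      using nfa_reach_map_letters[OF d'_def] by blast
    then show "v \<in> map h ` L" unfolding L nfa_lang_def by blast
  qed
  ultimately show ?thesis by (rule regular_onI)
qed

section \<open>Sorted enumerations\<close>

definition strict_total_on :: "('x \<Rightarrow> 'x \<Rightarrow> bool) \<Rightarrow> 'x set \<Rightarrow> bool" where
  "strict_total_on R V \<longleftrightarrow> (\<forall>x\<in>V. \<not> R x x)
     \<and> (\<forall>x\<in>V. \<forall>y\<in>V. \<forall>z\<in>V. R x y \<longrightarrow> R y z \<longrightarrow> R x z)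
     \<and> (\<forall>x\<in>V. \<forall>y\<in>V. x \<noteq> y \<longrightarrow> R x y \<or> R y x)"

lemma strict_total_on_subset: "strict_total_on R V \<Longrightarrow> V' \<subseteq> V \<Longrightarrow> strict_total_on R V'"
  unfolding strict_total_on_def by blast

lemma strict_total_on_image:
  assumes "strict_total_on R V" "\<And>a b. a \<in> V \<Longrightarrow> b \<in> V \<Longrightarrow> R' (h a) (h b) \<longleftrightarrow> R a b"
  shows "strict_total_on R' (h ` V)"
  unfolding strict_total_on_def
proof (intro conjI ballI impI)
  fix x y z assume "x \<in> h ` V" "y \<in> h ` V" "z \<in> h ` V"
  then obtain a b c where "a \<in> V" "b \<in> V" "c \<in> V" "x = h a" "y = h b" "z = h c" by blast
  moreover have "\<not> R a a" "R a b \<Longrightarrow> R b c \<Longrightarrow> R a c" "a \<noteq> b \<Longrightarrow> R a b \<or> R b a"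
    using assms(1) \<open>a \<in> V\<close> \<open>b \<in> V\<close> \<open>c \<in> V\<close> unfolding strict_total_on_def by blast+
  ultimately show "\<not> R' x x" "R' x y \<Longrightarrow> R' y z \<Longrightarrow> R' x z" "x \<noteq> y \<Longrightarrow> R' x y \<or> R' y x"
    using assms(2) by auto
qed

definition lex_pair :: "('x \<Rightarrow> 'x \<Rightarrow> bool) \<Rightarrow> ('y \<Rightarrow> 'y \<Rightarrow> bool) \<Rightarrow> 'x \<times> 'y \<Rightarrow> 'x \<times> 'y \<Rightarrow> bool" where
  "lex_pair R S p q \<longleftrightarrow> R (fst p) (fst q) \<or> fst p = fst q \<and> S (snd p) (snd q)"

lemma strict_total_on_lex_pair:
  assumes R: "strict_total_on R X" and S: "\<And>x. x \<in> X \<Longrightarrow> strict_total_on S (V x)"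
  shows "strict_total_on (lex_pair R S) (Sigma X V)"
  unfolding strict_total_on_def
proof (intro conjI ballI impI)
  fix p q t assume "p \<in> Sigma X V" "q \<in> Sigma X V" "t \<in> Sigma X V"
  then obtain x y x' y' x'' y'' where mem: "x \<in> X" "y \<in> V x" "x' \<in> X" "y' \<in> V x'"
    "x'' \<in> X" "y'' \<in> V x''" and pqt: "p = (x, y)" "q = (x', y')" "t = (x'', y'')"
    by blast
  have R_trans: "R x x' \<Longrightarrow> R x' x'' \<Longrightarrow> R x x''" and R_irrefl: "\<not> R x x"
    and R_total: "x \<noteq> x' \<Longrightarrow> R x x' \<or> R x' x"
    using R mem unfolding strict_total_on_def by blast+
  have S_trans: "x = x' \<Longrightarrow> x' = x'' \<Longrightarrow> S y y' \<Longrightarrow> S y' y'' \<Longrightarrow> S y y''"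
    and S_irrefl: "\<not> S y y" and S_total: "x = x' \<Longrightarrow> y \<noteq> y' \<Longrightarrow> S y y' \<or> S y' y"
    using S[OF mem(1)] mem unfolding strict_total_on_def by blast+
  show "\<not> lex_pair R S p p"
    using R_irrefl S_irrefl unfolding pqt lex_pair_def by simp
  show "lex_pair R S p t" if "lex_pair R S p q" "lex_pair R S q t"
    using that R_trans S_trans unfolding pqt lex_pair_def by auto
  show "lex_pair R S p q \<or> lex_pair R S q p" if "p \<noteq> q"
    using that R_total S_total unfolding pqt lex_pair_def by auto
qed

lemma sorted_wrt_unique:
  assumes "strict_total_on R V" "set xs = V" "sorted_wrt R xs" "set ys = V" "sorted_wrt R ys"
  shows "xs = ys"
  using assms
proof (induction xs arbitrary: ys V)
  case (Cons a xs)
  obtain b ys' where ys: "ys = b # ys'" using Cons.prems by (cases ys) auto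
  have irrefl: "\<forall>x\<in>V. \<not> R x x" and trans: "\<forall>x\<in>V. \<forall>y\<in>V. \<forall>z\<in>V. R x y \<longrightarrow> R y z \<longrightarrow> R x z"
    using Cons.prems(1) unfolding strict_total_on_def by blast+
  have "a \<in> V" "b \<in> V" using Cons.prems ys by auto
  have "a = b"
  proof (rule ccontr)
    assume "a \<noteq> b"
    then have "R b a" "R a b" using Cons.prems ys by auto
    then show False using irrefl trans \<open>a \<in> V\<close> \<open>b \<in> V\<close> by blast
  qed
  have "a \<notin> set xs" "b \<notin> set ys'"
    using Cons.prems ys irrefl \<open>a \<in> V\<close> \<open>b \<in> V\<close> by auto
  then have "set xs = V - {a}" "set ys' = V - {a}" using Cons.prems(2,4) ys \<open>a = b\<close> by auto
  moreover have "strict_total_on R (V - {a})" using Cons.prems(1) strict_total_on_subset by blast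
  ultimately have "xs = ys'" using Cons.prems(3,5) ys by (intro Cons.IH) simp_all
  then show ?case using \<open>a = b\<close> ys by simp
qed simp

lemma sorted_wrt_exists:
  assumes "finite V" "strict_total_on R V"
  shows "\<exists>xs. set xs = V \<and> sorted_wrt R xs"
  using assms
proof (induction V rule: finite_induct)
  case (insert a V)
  obtain xs where xs: "set xs = V" "sorted_wrt R xs"
    using insert strict_total_on_subset by blast
  have trans: "\<forall>x\<in>insert a V. \<forall>y\<in>insert a V. \<forall>z\<in>insert a V. R x y \<longrightarrow> R y z \<longrightarrow> R x z"
    and total: "\<forall>x\<in>insert a V. \<forall>y\<in>insert a V. x \<noteq> y \<longrightarrow> R x y \<or> R y x"
    using insert.prems unfolding strict_total_on_def by blast+
  let ?ys = "filter (\<lambda>y. R y a) xs @ a # filter (R a) xs"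
  have "\<forall>y\<in>V. R y a \<or> R a y" using total insert.hyps(2) by auto
  then have "set ?ys = insert a V" using xs(1) by auto
  moreover have "sorted_wrt R ?ys"
    unfolding sorted_wrt_append
  proof (intro conjI ballI)
    show "sorted_wrt R (filter (\<lambda>y. R y a) xs)" "sorted_wrt R (a # filter (R a) xs)"
      using xs(2) by (simp_all add: sorted_wrt_filter)
    fix x y assume "x \<in> set (filter (\<lambda>y. R y a) xs)" "y \<in> set (a # filter (R a) xs)"
    then show "R x y" using trans xs(1) by (cases "y = a") auto
  qed
  ultimately show ?case by blast
qed simp

lemma sorted_enum_eqI:
  assumes "strict_total_on R V" "set xs = V" "sorted_wrt R xs"
  shows "sorted_enum R V = xs"
  unfolding sorted_enum_def using assms sorted_wrt_unique by (intro the_equality) blast+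

lemma
  assumes "finite V" "strict_total_on R V"
  shows set_sorted_enum: "set (sorted_enum R V) = V"
    and sorted_wrt_sorted_enum: "sorted_wrt R (sorted_enum R V)"
  using sorted_wrt_exists[OF assms] sorted_enum_eqI[OF assms(2)] by auto

lemma sorted_enum_empty: "sorted_enum R {} = []"
  by (rule sorted_enum_eqI) (simp_all add: strict_total_on_def)

lemma sorted_enum_singleton: "\<not> R a a \<Longrightarrow> sorted_enum R {a} = [a]"
  by (rule sorted_enum_eqI) (simp_all add: strict_total_on_def)

lemma sorted_wrt_concat:
  assumes "\<forall>xs\<in>set xss. sorted_wrt R xs"
    and "sorted_wrt (\<lambda>xs ys. \<forall>x\<in>set xs. \<forall>y\<in>set ys. R x y) xss"
  shows "sorted_wrt R (concat xss)"
  using assms by (induction xss) (auto simp: sorted_wrt_append)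

lemma sorted_enum_lex_concat:
  assumes X: "finite X" "strict_total_on R X"
    and V: "\<And>x. x \<in> X \<Longrightarrow> finite (V x)" "\<And>x. x \<in> X \<Longrightarrow> strict_total_on S (V x)"
    and T: "\<And>x y x' y'. x \<in> X \<Longrightarrow> y \<in> V x \<Longrightarrow> x' \<in> X \<Longrightarrow> y' \<in> V x' \<Longrightarrow>
              T (h x y) (h x' y') \<longleftrightarrow> R x x' \<or> x = x' \<and> S y y'"
  shows "sorted_enum T (\<Union>x\<in>X. h x ` V x)
           = concat (map (\<lambda>x. map (h x) (sorted_enum S (V x))) (sorted_enum R X))"
proof (rule sorted_enum_eqI)
  have "strict_total_on (lex_pair R S) (Sigma X V)"
    using X(2) V(2) by (rule strict_total_on_lex_pair)
  then have "strict_total_on T (case_prod h ` Sigma X V)"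
    by (rule strict_total_on_image) (use T in \<open>auto simp: lex_pair_def\<close>)
  moreover have "case_prod h ` Sigma X V = (\<Union>x\<in>X. h x ` V x)" by auto
  ultimately show "strict_total_on T (\<Union>x\<in>X. h x ` V x)" by simp
  show "set (concat (map (\<lambda>x. map (h x) (sorted_enum S (V x))) (sorted_enum R X)))
      = (\<Union>x\<in>X. h x ` V x)"
    using X V by (simp add: set_sorted_enum)
  have block_sorted: "sorted_wrt T (map (h x) (sorted_enum S (V x)))" if "x \<in> X" for x
    unfolding sorted_wrt_map
    by (rule sorted_wrt_mono_rel[OF _ sorted_wrt_sorted_enum[OF V[OF that]]])
       (use that T V in \<open>simp add: set_sorted_enum\<close>)
  have blocks_sorted: "sorted_wrt (\<lambda>xs ys. \<forall>x\<in>set xs. \<forall>y\<in>set ys. T x y)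
      (map (\<lambda>x. map (h x) (sorted_enum S (V x))) (sorted_enum R X))"
    unfolding sorted_wrt_map
    by (rule sorted_wrt_mono_rel[OF _ sorted_wrt_sorted_enum[OF X]])
       (use X T V in \<open>auto simp: set_sorted_enum\<close>)
  show "sorted_wrt T (concat (map (\<lambda>x. map (h x) (sorted_enum S (V x))) (sorted_enum R X)))"
    using block_sorted blocks_sorted X by (intro sorted_wrt_concat) (auto simp: set_sorted_enum)
qed

section \<open>Lexicographic orders on words\<close>

lemma words_of_len_iff: "x \<in> words_of_len B n \<longleftrightarrow> set x \<subseteq> B \<and> length x = n"
  by (auto simp: words_of_len_def)

lemma finite_words_of_len: "finite B \<Longrightarrow> finite (words_of_len B n)"
  unfolding words_of_len_def lists_eq_set using finite_lists_length_eq[of B n]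
  by (simp add: conj_commute)

lemma words_of_len_0: "words_of_len B 0 = {[]}"
  by (auto simp: words_of_len_iff)

lemma lexr_irrefl:
  assumes "ordered_alphabet B r" "x \<in> words_of_len B n"
  shows "\<not> lexr r x x"
proof
  assume "lexr r x x"
  then obtain i where "i < length x" "r (x ! i) (x ! i)" unfolding lexr_def by blast
  moreover from this have "x ! i \<in> B" using assms(2) by (auto simp: words_of_len_iff)
  ultimately show False using assms(1) unfolding ordered_alphabet_def by blast
qed

lemma lexr_trans:
  assumes B: "ordered_alphabet B r" and xyz: "x \<in> words_of_len B n" "y \<in> words_of_len B n" "z \<in> words_of_len B n"
    and "lexr r x y" "lexr r y z"
  shows "lexr r x z"
proof -
  have len: "length x = n" "length y = n" "length z = n" using xyz by (simp_all add: words_of_len_iff)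
  obtain i where i: "i < n" "r (x ! i) (y ! i)" "\<forall>l. i < l \<and> l < n \<longrightarrow> x ! l = y ! l"
    using \<open>lexr r x y\<close> len unfolding lexr_def by auto
  obtain j where j: "j < n" "r (y ! j) (z ! j)" "\<forall>l. j < l \<and> l < n \<longrightarrow> y ! l = z ! l"
    using \<open>lexr r y z\<close> len unfolding lexr_def by auto
  have "x ! i \<in> B" "y ! i \<in> B" "z ! i \<in> B" using xyz i(1) by (auto simp: words_of_len_iff)
  then have r_trans: "r (x ! i) (y ! i) \<Longrightarrow> r (y ! i) (z ! i) \<Longrightarrow> r (x ! i) (z ! i)"
    using B unfolding ordered_alphabet_def by blast
  consider "i < j" | "i = j" | "j < i" by linarith
  then show ?thesis
  proof cases
    case 1
    then show ?thesis using i j len unfolding lexr_def by (intro exI[of _ j]) auto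
  next
    case 2
    then show ?thesis using i j len r_trans unfolding lexr_def by (intro exI[of _ i]) auto
  next
    case 3
    then show ?thesis using i j len unfolding lexr_def by (intro exI[of _ i]) auto
  qed
qed

lemma lexr_total:
  assumes B: "ordered_alphabet B r" and xy: "x \<in> words_of_len B n" "y \<in> words_of_len B n" "x \<noteq> y"
  shows "lexr r x y \<or> lexr r y x"
proof -
  have len: "length x = n" "length y = n" using xy by (simp_all add: words_of_len_iff)
  define D where "D = {i. i < n \<and> x ! i \<noteq> y ! i}"
  define i where "i = Max D"
  have "finite D" unfolding D_def by simp
  moreover have "D \<noteq> {}"
    using xy(3) len nth_equalityI[of x y] unfolding D_def by auto
  ultimately have "i \<in> D" unfolding i_def by (rule Max_in)
  then have "i < n" "x ! i \<noteq> y ! i" "x ! i \<in> B" "y ! i \<in> B"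
    using xy by (auto simp: D_def words_of_len_iff)
  then have "r (x ! i) (y ! i) \<or> r (y ! i) (x ! i)"
    using B unfolding ordered_alphabet_def by blast
  moreover have above: "\<forall>l. i < l \<and> l < n \<longrightarrow> x ! l = y ! l"
    using Max_ge[OF \<open>finite D\<close>] unfolding i_def D_def by fastforce
  ultimately show ?thesis
    unfolding lexr_def using len \<open>i < n\<close> by auto
qed

lemma lexr_strict_total: "ordered_alphabet B r \<Longrightarrow> strict_total_on (lexr r) (words_of_len B n)"
  unfolding strict_total_on_def using lexr_irrefl lexr_trans lexr_total by blast

lemma prod_alph_iff: "bs \<in> prod_alph k Bs \<longleftrightarrow> length bs = k \<and> (\<forall>i<k. bs ! i \<in> Bs i)"
  by (simp add: prod_alph_def)

lemma prod_alph_0: "prod_alph 0 Bs = {[]}"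
  by (auto simp: prod_alph_iff)

lemma prod_alph_Suc:
  "prod_alph (Suc k) Bs = {b # c | b c. b \<in> Bs 0 \<and> c \<in> prod_alph k (\<lambda>i. Bs (Suc i))}"
proof (rule set_eqI)
  fix bs
  show "bs \<in> prod_alph (Suc k) Bs \<longleftrightarrow> bs \<in> {b # c | b c. b \<in> Bs 0 \<and> c \<in> prod_alph k (\<lambda>i. Bs (Suc i))}"
    by (cases bs) (auto simp: prod_alph_iff All_less_Suc2)
qed

lemma finite_prod_alph:
  assumes "\<forall>i<k. finite (Bs i)"
  shows "finite (prod_alph k Bs)"
proof (rule finite_subset)
  show "prod_alph k Bs \<subseteq> {bs. set bs \<subseteq> (\<Union>i<k. Bs i) \<and> length bs = k}"
    by (force simp: prod_alph_iff in_set_conv_nth)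
  show "finite {bs. set bs \<subseteq> (\<Union>i<k. Bs i) \<and> length bs = k}"
    using assms by (intro finite_lists_length_eq) auto
qed

lemma words_of_len_prod_alph_0: "words_of_len (prod_alph 0 Bs) n = {replicate n []}"
  by (auto simp: words_of_len_iff prod_alph_0 intro!: replicate_eqI)

lemma words_of_len_prod_alph_Suc:
  "words_of_len (prod_alph (Suc k) Bs) n
     = (\<lambda>(x, y). map2 (#) x y) ` (words_of_len (Bs 0) n \<times> words_of_len (prod_alph k (\<lambda>i. Bs (Suc i))) n)"
proof (rule set_eqI)
  fix z
  show "z \<in> words_of_len (prod_alph (Suc k) Bs) n \<longleftrightarrow>
    z \<in> (\<lambda>(x, y). map2 (#) x y) ` (words_of_len (Bs 0) n \<times> words_of_len (prod_alph k (\<lambda>i. Bs (Suc i))) n)"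
  proof
    assume z: "z \<in> words_of_len (prod_alph (Suc k) Bs) n"
    then have "\<forall>l\<in>set z. l \<noteq> [] \<and> hd l \<in> Bs 0 \<and> tl l \<in> prod_alph k (\<lambda>i. Bs (Suc i))"
      unfolding words_of_len_iff prod_alph_Suc by auto
    moreover from this have "z = map2 (#) (map hd z) (map tl z)"
      by (induction z) auto
    ultimately show "z \<in> (\<lambda>(x, y). map2 (#) x y) ` (words_of_len (Bs 0) n \<times> words_of_len (prod_alph k (\<lambda>i. Bs (Suc i))) n)"
      using z by (auto simp: words_of_len_iff intro!: image_eqI[of _ _ "(map hd z, map tl z)"])
  next
    assume "z \<in> (\<lambda>(x, y). map2 (#) x y) ` (words_of_len (Bs 0) n \<times> words_of_len (prod_alph k (\<lambda>i. Bs (Suc i))) n)"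
    then obtain x y where z: "z = map2 (#) x y" and "length x = n" "length y = n"
      and "set x \<subseteq> Bs 0" "set y \<subseteq> prod_alph k (\<lambda>i. Bs (Suc i))"
      by (auto simp: words_of_len_iff)
    then have "x ! i \<in> Bs 0" "y ! i \<in> prod_alph k (\<lambda>i. Bs (Suc i))" if "i < n" for i
      using that nth_mem[of i x] nth_mem[of i y] by auto
    then show "z \<in> words_of_len (prod_alph (Suc k) Bs) n"
      unfolding words_of_len_iff prod_alph_Suc z using \<open>length x = n\<close> \<open>length y = n\<close>
      by (auto simp: set_zip)
  qed
qed

lemma map_nth_0_map2_Cons: "length x = length y \<Longrightarrow> map (\<lambda>l. l ! 0) (map2 (#) x y) = x"
  and map_nth_Suc_map2_Cons: "length x = length y \<Longrightarrow> map (\<lambda>l. l ! Suc i) (map2 (#) x y) = map (\<lambda>l. l ! i) y"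
  by (induction x y rule: list_induct2) auto

lemma comp_order_0 [simp]: "\<not> comp_order 0 rs x y"
  by (simp add: comp_order_def)

lemma comp_order_Suc:
  assumes "length x = length y" "length x' = length y'"
  shows "comp_order (Suc k) rs (map2 (#) x y) (map2 (#) x' y')
           \<longleftrightarrow> lexr (rs 0) x x' \<or> x = x' \<and> comp_order k (\<lambda>i. rs (Suc i)) y y'"
  unfolding comp_order_def Ex_less_Suc2 All_less_Suc2
    map_nth_0_map2_Cons[OF assms(1)] map_nth_0_map2_Cons[OF assms(2)]
    map_nth_Suc_map2_Cons[OF assms(1)] map_nth_Suc_map2_Cons[OF assms(2)]
  by blast

lemma comp_order_strict_total:
  "\<forall>i<k. ordered_alphabet (Bs i) (rs i) \<Longrightarrow> strict_total_on (comp_order k rs) (words_of_len (prod_alph k Bs) n)"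
proof (induction k arbitrary: Bs rs)
  case 0
  then show ?case by (simp add: words_of_len_prod_alph_0 strict_total_on_def)
next
  case (Suc k)
  let ?W = "words_of_len (Bs 0) n" and ?W' = "words_of_len (prod_alph k (\<lambda>i. Bs (Suc i))) n"
  have "strict_total_on (lex_pair (lexr (rs 0)) (comp_order k (\<lambda>i. rs (Suc i)))) (?W \<times> ?W')"
    using Suc.prems by (intro strict_total_on_lex_pair lexr_strict_total Suc.IH) auto
  then have "strict_total_on (comp_order (Suc k) rs) ((\<lambda>(x, y). map2 (#) x y) ` (?W \<times> ?W'))"
    by (rule strict_total_on_image) (auto simp: lex_pair_def comp_order_Suc words_of_len_iff)
  then show ?case by (simp add: words_of_len_prod_alph_Suc)
qed

section \<open>Automatic transducers over alphabets with tracks\<close>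

text \<open>Letters of A are pairs (a, bs), where bs holds the tracks added by earlier maplex steps;
  the k tracks of the transducer are appended to bs.  Lex_automatic is the case A = base_alph.\<close>

definition ext_alph_prod :: "('a \<times> nat list) set \<Rightarrow> nat \<Rightarrow> (nat \<Rightarrow> nat set) \<Rightarrow> ('a \<times> nat list) set" where
  "ext_alph_prod A k Bs = {(a, bs @ c) | a bs c. (a, bs) \<in> A \<and> c \<in> prod_alph k Bs}"

definition comb_prod :: "('a \<times> nat list) list \<Rightarrow> nat list list \<Rightarrow> ('a \<times> nat list) list" where
  "comb_prod u z = map (\<lambda>((a, bs), c). (a, bs @ c)) (zip u z)"

definition lex_auto_out :: "nat \<Rightarrow> (nat \<Rightarrow> nat set) \<Rightarrow> (nat \<Rightarrow> nat \<Rightarrow> nat \<Rightarrow> bool)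
    \<Rightarrow> ('a \<times> nat list) list set \<Rightarrow> ('a \<times> nat list) list set \<Rightarrow> ('g \<Rightarrow> ('a \<times> nat list) list set)
    \<Rightarrow> ('a \<times> nat list) list \<Rightarrow> 'g list option" where
  "lex_auto_out k Bs rs Ldom Luniv Lg u =
     (if u \<in> Ldom then
        Some (map (\<lambda>z. THE \<gamma>. comb_prod u z \<in> Lg \<gamma>)
          (sorted_enum (comp_order k rs)
             {z \<in> words_of_len (prod_alph k Bs) (length u). comb_prod u z \<in> Luniv}))
      else None)"

definition lex_auto_data :: "nat \<Rightarrow> ('a \<times> nat list) set \<Rightarrow> (nat \<Rightarrow> nat set) \<Rightarrow> (nat \<Rightarrow> nat \<Rightarrow> nat \<Rightarrow> bool)
    \<Rightarrow> ('a \<times> nat list) list set \<Rightarrow> ('a \<times> nat list) list set \<Rightarrow> ('g \<Rightarrow> ('a \<times> nat list) list set) \<Rightarrow> bool" where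
  "lex_auto_data k A Bs rs Ldom Luniv Lg \<longleftrightarrow>
     (\<forall>i<k. ordered_alphabet (Bs i) (rs i))
   \<and> regular_on A Ldom
   \<and> regular_on (ext_alph_prod A k Bs) Luniv
   \<and> (\<forall>\<gamma>. regular_on (ext_alph_prod A k Bs) (Lg \<gamma>))
   \<and> (\<forall>u\<in>Ldom. \<forall>z\<in>words_of_len (prod_alph k Bs) (length u).
        comb_prod u z \<in> Luniv \<longrightarrow> (\<exists>!\<gamma>. comb_prod u z \<in> Lg \<gamma>))"

definition lex_automatic_on :: "nat \<Rightarrow> ('a \<times> nat list) set \<Rightarrow> (('a \<times> nat list) list \<Rightarrow> 'g list option) \<Rightarrow> bool" where
  "lex_automatic_on k A f \<longleftrightarrow> (\<exists>Bs rs Ldom Luniv Lg. lex_auto_data k A Bs rs Ldom Luniv Lg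
     \<and> (\<forall>u\<in>lists A. f u = lex_auto_out k Bs rs Ldom Luniv Lg u))"

lemma length_comb [simp]: "length (comb u x) = min (length u) (length x)"
  by (simp add: comb_def)

lemma length_comb_prod [simp]: "length (comb_prod u z) = min (length u) (length z)"
  by (simp add: comb_prod_def)

lemma ext_alph_prod_0: "ext_alph_prod A 0 Bs = A"
  by (auto simp: ext_alph_prod_def prod_alph_0)

lemma ext_alph_prod_Suc:
  "ext_alph_prod (ext_alph A (Bs 0)) k (\<lambda>i. Bs (Suc i)) = ext_alph_prod A (Suc k) Bs"
proof (rule set_eqI)
  fix p
  show "p \<in> ext_alph_prod (ext_alph A (Bs 0)) k (\<lambda>i. Bs (Suc i)) \<longleftrightarrow> p \<in> ext_alph_prod A (Suc k) Bs"
  proof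
    assume "p \<in> ext_alph_prod (ext_alph A (Bs 0)) k (\<lambda>i. Bs (Suc i))"
    then obtain a bs b c where "p = (a, bs @ b # c)" "(a, bs) \<in> A" "b \<in> Bs 0"
      "c \<in> prod_alph k (\<lambda>i. Bs (Suc i))"
      unfolding ext_alph_prod_def ext_alph_def by auto
    then show "p \<in> ext_alph_prod A (Suc k) Bs"
      unfolding ext_alph_prod_def prod_alph_Suc by blast
  next
    assume "p \<in> ext_alph_prod A (Suc k) Bs"
    then obtain a bs b c where "p = (a, (bs @ [b]) @ c)" "(a, bs) \<in> A" "b \<in> Bs 0"
      "c \<in> prod_alph k (\<lambda>i. Bs (Suc i))"
      unfolding ext_alph_prod_def prod_alph_Suc by auto
    then show "p \<in> ext_alph_prod (ext_alph A (Bs 0)) k (\<lambda>i. Bs (Suc i))"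
      unfolding ext_alph_prod_def ext_alph_def by blast
  qed
qed

lemma comb_prod_replicate_Nil: "comb_prod u (replicate (length u) []) = u"
  by (induction u) (auto simp: comb_prod_def)

lemma comb_prod_comb:
  "length u = length x \<Longrightarrow> length x = length y \<Longrightarrow> comb_prod (comb u x) y = comb_prod u (map2 (#) x y)"
  by (induction u x y rule: list_induct3) (auto simp: comb_prod_def comb_def)

section \<open>Simple transductions\<close>

definition regular_fibres :: "'c set \<Rightarrow> ('c list \<Rightarrow> 'g list option) \<Rightarrow> bool" where
  "regular_fibres A f \<longleftrightarrow> (\<forall>w. regular_on A {u \<in> lists A. f u = Some w})
     \<and> (\<forall>u\<in>lists A. \<forall>w. f u = Some w \<longrightarrow> length w \<le> 1)"

lemma simple_trans_regular_fibres:
  assumes "simple_trans A f"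
  shows "regular_fibres A f"
proof -
  obtain n L w where reg: "\<forall>i<(n::nat). regular_on A (L i) \<and> length (w i) \<le> 1"
    and val: "\<forall>i<n. \<forall>u\<in>L i. f u = Some (w i)"
    and undef: "\<forall>u\<in>lists A. (\<forall>i<n. u \<notin> L i) \<longrightarrow> f u = None"
    using assms unfolding simple_trans_def by blast
  have covered: "\<exists>i<n. u \<in> L i \<and> v = w i" if "u \<in> lists A" "f u = Some v" for u v
    using that undef val by fastforce
  have fibre: "{u \<in> lists A. f u = Some v} = (\<Union>i\<in>{i. i < n \<and> w i = v}. L i)" for v
    using covered val reg regular_on_subset_lists by fastforce
  have "regular_on A {u \<in> lists A. f u = Some v}" for v
    unfolding fibre using reg by (intro regular_on_UN) auto
  moreover have "length v \<le> 1" if "u \<in> lists A" "f u = Some v" for u v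
    using covered[OF that] reg by auto
  ultimately show ?thesis unfolding regular_fibres_def by blast
qed

text \<open>The fibres of the values [] and [\<gamma>] give the languages of a simple transduction; they
  are disjoint because f is a function.\<close>

lemma regular_fibres_simple_trans:
  fixes f :: "'c list \<Rightarrow> 'g::finite list option"
  assumes "regular_fibres A f"
  shows "simple_trans A f"
proof -
  obtain gs :: "'g list" where gs: "set gs = UNIV" "distinct gs"
    using finite_distinct_list[OF finite_UNIV] by blast
  define w :: "nat \<Rightarrow> 'g list" where "w = case_nat [] (\<lambda>i. [gs ! i])"
  define L where "L i = {u \<in> lists A. f u = Some (w i)}" for i
  let ?n = "Suc (length gs)"
  have inj: "i = j" if "i < ?n" "j < ?n" "w i = w j" for i j
    using that nth_eq_iff_index_eq[OF gs(2)] unfolding w_def by (cases i; cases j) auto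
  have covered: "\<exists>i<?n. v = w i" if "length v \<le> 1" for v
  proof (cases v)
    case (Cons \<gamma> v')
    then obtain i where "i < length gs" "gs ! i = \<gamma>" using gs(1) by (metis UNIV_I in_set_conv_nth)
    then show ?thesis using that Cons by (intro exI[of _ "Suc i"]) (auto simp: w_def)
  qed (auto simp: w_def)
  have "\<forall>i<?n. regular_on A (L i) \<and> length (w i) \<le> 1"
    using assms unfolding regular_fibres_def L_def w_def by (auto split: nat.split)
  moreover have "\<forall>i<?n. \<forall>j<?n. i \<noteq> j \<longrightarrow> L i \<inter> L j = {}"
  proof (intro allI impI)
    fix i j assume "i < ?n" "j < ?n" "i \<noteq> j"
    then have "w i \<noteq> w j" using inj by blast
    then show "L i \<inter> L j = {}" unfolding L_def by auto
  qed
  moreover have "\<forall>i<?n. \<forall>u\<in>L i. f u = Some (w i)"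
    unfolding L_def by simp
  moreover have "\<forall>u\<in>lists A. (\<forall>i<?n. u \<notin> L i) \<longrightarrow> f u = None"
  proof (intro ballI impI, rule ccontr)
    fix u assume u: "u \<in> lists A" "\<forall>i<?n. u \<notin> L i" "f u \<noteq> None"
    then obtain v where v: "f u = Some v" by blast
    then have "length v \<le> 1" using assms u(1) unfolding regular_fibres_def by blast
    then obtain i where "i < ?n" "v = w i" using covered by blast
    then show False using u v unfolding L_def by auto
  qed
  ultimately show ?thesis unfolding simple_trans_def by (intro exI[of _ ?n] exI[of _ L] exI[of _ w]) simp
qed

lemma lex_auto_out_0:
  "lex_auto_out 0 Bs rs Ldom Luniv Lg u =
     (if u \<in> Ldom then Some (if u \<in> Luniv then [THE \<gamma>. u \<in> Lg \<gamma>] else []) else None)"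
proof -
  have "{z \<in> words_of_len (prod_alph 0 Bs) (length u). comb_prod u z \<in> Luniv} =
        (if u \<in> Luniv then {replicate (length u) []} else {})"
    unfolding words_of_len_prod_alph_0 using comb_prod_replicate_Nil[of u] by auto
  then show ?thesis unfolding lex_auto_out_def
    by (simp add: sorted_enum_empty sorted_enum_singleton comb_prod_replicate_Nil)
qed

lemma lex_automatic_on_0_regular_fibres:
  assumes "lex_automatic_on 0 A f"
  shows "regular_fibres A f"
proof -
  obtain Bs rs Ldom Luniv Lg where D: "lex_auto_data 0 A Bs rs Ldom Luniv Lg"
    and f: "\<forall>u\<in>lists A. f u = lex_auto_out 0 Bs rs Ldom Luniv Lg u"
    using assms unfolding lex_automatic_on_def by blast
  have reg: "regular_on A Ldom" "regular_on A Luniv" "\<And>\<gamma>. regular_on A (Lg \<gamma>)"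
    using D unfolding lex_auto_data_def ext_alph_prod_0 by blast+
  have unique: "\<exists>!\<gamma>. u \<in> Lg \<gamma>" if "u \<in> Ldom" "u \<in> Luniv" for u
    using D that comb_prod_replicate_Nil[of u]
    unfolding lex_auto_data_def words_of_len_prod_alph_0 by force
  have dom: "Ldom \<subseteq> lists A" using reg(1) by (rule regular_on_subset_lists)
  let ?g = "\<lambda>u. if u \<in> Ldom then Some (if u \<in> Luniv then [THE \<gamma>. u \<in> Lg \<gamma>] else []) else None"
  have fu: "f u = ?g u" if "u \<in> lists A" for u
    using f that by (simp add: lex_auto_out_0)
  have fibre: "{u \<in> lists A. f u = Some v} = {u \<in> Ldom. ?g u = Some v}" for v
  proof (rule set_eqI)
    fix u
    show "u \<in> {u \<in> lists A. f u = Some v} \<longleftrightarrow> u \<in> {u \<in> Ldom. ?g u = Some v}"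
      using fu[of u] dom by (cases "u \<in> lists A") auto
  qed
  have the_Lg: "(THE \<gamma>. u \<in> Lg \<gamma>) = \<gamma> \<longleftrightarrow> u \<in> Lg \<gamma>" if "u \<in> Ldom" "u \<in> Luniv" for u \<gamma>
    using unique[OF that] the1_equality[OF unique[OF that]] theI'[OF unique[OF that]] by blast
  have "{u \<in> Ldom. ?g u = Some []} = Ldom - Luniv"
    "{u \<in> Ldom. ?g u = Some [\<gamma>]} = Ldom \<inter> Luniv \<inter> Lg \<gamma>"
    "{u \<in> Ldom. ?g u = Some (a # b # v)} = {}" for \<gamma> a b v
    using the_Lg by auto
  then have "regular_on A {u \<in> lists A. f u = Some v}" for v
    unfolding fibre using reg by (cases v rule: remdups_adj.cases)
      (simp_all add: regular_on_Diff regular_on_Int regular_on_empty)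
  moreover have "length v \<le> 1" if "u \<in> lists A" "f u = Some v" for u v
    using fu[OF that(1)] that(2) by (auto split: if_splits)
  ultimately show ?thesis unfolding regular_fibres_def by blast
qed

lemma regular_fibres_lex_automatic_on_0:
  fixes f :: "('a \<times> nat list) list \<Rightarrow> 'g::finite list option"
  assumes "regular_fibres A f"
  shows "lex_automatic_on 0 A f"
proof -
  define Lg where "Lg \<gamma> = {u \<in> lists A. f u = Some [\<gamma>]}" for \<gamma>
  define Luniv where "Luniv = (\<Union>\<gamma>. Lg \<gamma>)"
  define Ldom where "Ldom = {u \<in> lists A. f u = Some []} \<union> Luniv"
  have reg: "regular_on A Ldom" "regular_on A Luniv" "\<And>\<gamma>. regular_on A (Lg \<gamma>)"
    using assms unfolding regular_fibres_def Ldom_def Luniv_def Lg_def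
    by (simp_all add: regular_on_Un regular_on_UN)
  have unique: "\<exists>!\<gamma>. u \<in> Lg \<gamma>" if "u \<in> Luniv" for u
    using that unfolding Luniv_def Lg_def by auto
  have "lex_auto_data 0 A (\<lambda>_. {}) (\<lambda>_ _ _. False) Ldom Luniv Lg"
    using reg unique comb_prod_replicate_Nil
    unfolding lex_auto_data_def ext_alph_prod_0 words_of_len_prod_alph_0 by auto
  moreover have "f u = lex_auto_out 0 (\<lambda>_. {}) (\<lambda>_ _ _. False) Ldom Luniv Lg u" if "u \<in> lists A" for u
  proof (cases "f u")
    case (Some v)
    then have "length v \<le> 1" using assms that unfolding regular_fibres_def by blast
    then show ?thesis
      using Some that the1_equality[OF unique]
      by (auto simp: lex_auto_out_0 Ldom_def Luniv_def Lg_def length_Suc_conv le_Suc_eq)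
  qed (auto simp: lex_auto_out_0 Ldom_def Luniv_def Lg_def)
  ultimately show ?thesis unfolding lex_automatic_on_def by blast
qed

lemma lex_automatic_on_0_iff_simple_trans:
  fixes f :: "('a \<times> nat list) list \<Rightarrow> 'g::finite list option"
  shows "lex_automatic_on 0 A f \<longleftrightarrow> simple_trans A f"
  using lex_automatic_on_0_regular_fibres regular_fibres_lex_automatic_on_0
    simple_trans_regular_fibres regular_fibres_simple_trans by blast

section \<open>One maplex step\<close>

definition strip_track :: "'a \<times> nat list \<Rightarrow> 'a \<times> nat list" where
  "strip_track p = (fst p, butlast (snd p))"

lemma strip_track_ext_alph: "strip_track ` ext_alph A B \<subseteq> A"
  by (auto simp: strip_track_def ext_alph_def)

lemma comb_in_lists_ext_alph:
  assumes "u \<in> lists A" "x \<in> words_of_len B (length u)"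
  shows "comb u x \<in> lists (ext_alph A B)"
proof -
  have "length x = length u" "set x \<subseteq> B" using assms(2) by (auto simp: words_of_len_iff)
  then show ?thesis using assms(1)
    by (induction u x rule: list_induct2') (auto simp: comb_def ext_alph_def)
qed

lemma map_strip_track_comb: "length u = length x \<Longrightarrow> map strip_track (comb u x) = u"
  by (induction u x rule: list_induct2) (auto simp: comb_def strip_track_def)

lemma lists_ext_alph_eq_comb:
  assumes "w \<in> lists (ext_alph A B)"
  obtains x where "x \<in> words_of_len B (length w)" "w = comb (map strip_track w) x"
proof
  have "\<forall>p\<in>set w. \<exists>a bs b. p = (a, bs @ [b]) \<and> b \<in> B"
    using assms by (auto simp: ext_alph_def)
  then show "map (\<lambda>p. last (snd p)) w \<in> words_of_len B (length w)"
    and "w = comb (map strip_track w) (map (\<lambda>p. last (snd p)) w)"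
    by (induction w) (auto simp: words_of_len_iff comb_def strip_track_def)
qed

lemma regular_on_all_extensions:
  assumes "regular_on (ext_alph A B) L"
  shows "regular_on A {u \<in> lists A. \<forall>x\<in>words_of_len B (length u). comb u x \<in> L}"
proof -
  let ?M = "map strip_track ` (lists (ext_alph A B) - L)"
  have "u \<in> ?M \<longleftrightarrow> (\<exists>x\<in>words_of_len B (length u). comb u x \<notin> L)" if "u \<in> lists A" for u
  proof
    assume "u \<in> ?M"
    then obtain w where w: "w \<in> lists (ext_alph A B)" "w \<notin> L" "u = map strip_track w" by blast
    obtain x where "x \<in> words_of_len B (length w)" "w = comb (map strip_track w) x"
      by (rule lists_ext_alph_eq_comb[OF w(1)])
    then show "\<exists>x\<in>words_of_len B (length u). comb u x \<notin> L" using w(2,3) by (intro bexI[of _ x]) auto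
  next
    assume "\<exists>x\<in>words_of_len B (length u). comb u x \<notin> L"
    then obtain x where x: "x \<in> words_of_len B (length u)" "comb u x \<notin> L" by blast
    show "u \<in> ?M"
    proof (rule image_eqI)
      show "u = map strip_track (comb u x)"
        using x(1) by (intro map_strip_track_comb[symmetric]) (simp add: words_of_len_iff)
      show "comb u x \<in> lists (ext_alph A B) - L"
        using comb_in_lists_ext_alph[OF that x(1)] x(2) by blast
    qed
  qed
  then have "{u \<in> lists A. \<forall>x\<in>words_of_len B (length u). comb u x \<in> L} = lists A - ?M" by blast
  moreover have "regular_on A ?M"
    using regular_on_Diff[OF regular_on_lists assms] strip_track_ext_alph by (rule regular_on_image)
  ultimately show ?thesis by (simp add: regular_on_compl)
qed

lemma set_sorted_enum_words_of_len:
  assumes "ordered_alphabet B r"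
  shows "set (sorted_enum (lexr r) (words_of_len B n)) = words_of_len B n"
proof (rule set_sorted_enum[OF finite_words_of_len lexr_strict_total[OF assms]])
  show "finite B" using assms by (simp add: ordered_alphabet_def)
qed

lemma maplex_None:
  assumes "ordered_alphabet B r" "x \<in> words_of_len B (length u)" "g (comb u x) = None"
  shows "maplex B r g u = None"
proof -
  have "x \<in> set (sorted_enum (lexr r) (words_of_len B (length u)))"
    using assms(2) set_sorted_enum_words_of_len[OF assms(1)] by blast
  then have "\<not> (\<forall>x\<in>set (sorted_enum (lexr r) (words_of_len B (length u))). g (comb u x) \<noteq> None)"
    using assms(3) by blast
  then show ?thesis unfolding maplex_def Let_def by (rule if_not_P)
qed

lemma maplex_Some:
  assumes "ordered_alphabet B r" "\<forall>x\<in>words_of_len B (length u). g (comb u x) \<noteq> None"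
  shows "maplex B r g u
    = Some (concat (map (\<lambda>x. the (g (comb u x))) (sorted_enum (lexr r) (words_of_len B (length u)))))"
  using assms(2) unfolding maplex_def Let_def set_sorted_enum_words_of_len[OF assms(1)] by simp

lemma sorted_enum_comp_order_Suc:
  assumes oa: "\<forall>i<Suc k. ordered_alphabet (Bs i) (rs i)" and len: "length u = n"
  shows "sorted_enum (comp_order (Suc k) rs)
           {z \<in> words_of_len (prod_alph (Suc k) Bs) n. comb_prod u z \<in> Luniv}
       = concat (map (\<lambda>x. map (map2 (#) x) (sorted_enum (comp_order k (\<lambda>i. rs (Suc i)))
              {y \<in> words_of_len (prod_alph k (\<lambda>i. Bs (Suc i))) n. comb_prod (comb u x) y \<in> Luniv}))
           (sorted_enum (lexr (rs 0)) (words_of_len (Bs 0) n)))"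
proof -
  let ?X = "words_of_len (Bs 0) n" and ?W = "words_of_len (prod_alph k (\<lambda>i. Bs (Suc i))) n"
  let ?V = "\<lambda>x. {y \<in> ?W. comb_prod (comb u x) y \<in> Luniv}"
  have oa0: "ordered_alphabet (Bs 0) (rs 0)" and oa': "\<forall>i<k. ordered_alphabet (Bs (Suc i)) (rs (Suc i))"
    using oa by auto
  have fin: "finite ?W"
    using oa' by (intro finite_words_of_len finite_prod_alph) (simp add: ordered_alphabet_def)
  have "{z \<in> words_of_len (prod_alph (Suc k) Bs) n. comb_prod u z \<in> Luniv} = (\<Union>x\<in>?X. map2 (#) x ` ?V x)"
    unfolding words_of_len_prod_alph_Suc
    using len comb_prod_comb[of u] by (auto simp: words_of_len_iff)
  also have "sorted_enum (comp_order (Suc k) rs) \<dots>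
      = concat (map (\<lambda>x. map (map2 (#) x) (sorted_enum (comp_order k (\<lambda>i. rs (Suc i))) (?V x)))
          (sorted_enum (lexr (rs 0)) ?X))"
  proof (rule sorted_enum_lex_concat)
    show "finite ?X" using oa0 by (simp add: finite_words_of_len ordered_alphabet_def)
    show "strict_total_on (lexr (rs 0)) ?X" using oa0 by (rule lexr_strict_total)
    show "finite (?V x)" for x using fin by simp
    show "strict_total_on (comp_order k (\<lambda>i. rs (Suc i))) (?V x)" for x
      using comp_order_strict_total[OF oa'] by (rule strict_total_on_subset) blast
    show "comp_order (Suc k) rs (map2 (#) x y) (map2 (#) x' y')
        \<longleftrightarrow> lexr (rs 0) x x' \<or> x = x' \<and> comp_order k (\<lambda>i. rs (Suc i)) y y'"
      if "x \<in> ?X" "y \<in> ?V x" "x' \<in> ?X" "y' \<in> ?V x'" for x y x' y'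
      using that by (intro comp_order_Suc) (simp_all add: words_of_len_iff)
  qed
  finally show ?thesis .
qed

lemma lex_auto_out_comb:
  assumes oa: "\<forall>i<k. ordered_alphabet (Bs i) (rs i)" and "length x = length u" "comb u x \<in> Ldom"
  shows "lex_auto_out k Bs rs Ldom Luniv Lg (comb u x)
    = Some (map (\<lambda>y. THE \<gamma>. comb_prod u (map2 (#) x y) \<in> Lg \<gamma>) (sorted_enum (comp_order k rs)
        {y \<in> words_of_len (prod_alph k Bs) (length u). comb_prod (comb u x) y \<in> Luniv}))"
proof -
  let ?W = "words_of_len (prod_alph k Bs) (length u)"
  let ?V = "{y \<in> ?W. comb_prod (comb u x) y \<in> Luniv}"
  have "finite ?W"
    using oa by (intro finite_words_of_len finite_prod_alph) (simp add: ordered_alphabet_def)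
  moreover have "strict_total_on (comp_order k rs) ?W"
    using oa by (rule comp_order_strict_total)
  ultimately have "set (sorted_enum (comp_order k rs) ?V) = ?V"
    by (intro set_sorted_enum) (auto elim: strict_total_on_subset)
  then show ?thesis
    unfolding lex_auto_out_def using assms(2,3) comb_prod_comb[of u x] by (auto simp: words_of_len_iff)
qed

lemma lex_auto_out_Suc:
  assumes oa: "\<forall>i<Suc k. ordered_alphabet (Bs i) (rs i)"
    and dom: "u \<in> Ldom \<longleftrightarrow> (\<forall>x\<in>words_of_len (Bs 0) (length u). comb u x \<in> Ldom')"
  shows "lex_auto_out (Suc k) Bs rs Ldom Luniv Lg u
       = maplex (Bs 0) (rs 0) (lex_auto_out k (\<lambda>i. Bs (Suc i)) (\<lambda>i. rs (Suc i)) Ldom' Luniv Lg) u"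
proof (cases "u \<in> Ldom")
  case True
  let ?X = "words_of_len (Bs 0) (length u)"
  let ?Y = "\<lambda>x. sorted_enum (comp_order k (\<lambda>i. rs (Suc i)))
    {y \<in> words_of_len (prod_alph k (\<lambda>i. Bs (Suc i))) (length u). comb_prod (comb u x) y \<in> Luniv}"
  let ?g = "lex_auto_out k (\<lambda>i. Bs (Suc i)) (\<lambda>i. rs (Suc i)) Ldom' Luniv Lg"
  let ?out = "\<lambda>z. THE \<gamma>. comb_prod u z \<in> Lg \<gamma>"
  have oa0: "ordered_alphabet (Bs 0) (rs 0)" using oa by blast
  have g: "?g (comb u x) = Some (map (\<lambda>y. ?out (map2 (#) x y)) (?Y x))" if "x \<in> ?X" for x
    using that True dom oa by (intro lex_auto_out_comb) (auto simp: words_of_len_iff)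
  have "maplex (Bs 0) (rs 0) ?g u = Some (concat (map (\<lambda>x. the (?g (comb u x))) (sorted_enum (lexr (rs 0)) ?X)))"
    using g by (intro maplex_Some[OF oa0]) auto
  also have "\<dots> = Some (concat (map (\<lambda>x. map ?out (map (map2 (#) x) (?Y x))) (sorted_enum (lexr (rs 0)) ?X)))"
    by (intro arg_cong[where f = "\<lambda>l. Some (concat l)"] map_cong)
      (simp_all add: g set_sorted_enum_words_of_len[OF oa0])
  also have "\<dots> = lex_auto_out (Suc k) Bs rs Ldom Luniv Lg u"
    unfolding lex_auto_out_def sorted_enum_comp_order_Suc[OF oa refl]
    using True by (simp add: map_concat comp_def)
  finally show ?thesis by simp
next
  case False
  then obtain x where x: "x \<in> words_of_len (Bs 0) (length u)" "comb u x \<notin> Ldom'"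
    using dom by blast
  then have "maplex (Bs 0) (rs 0) (lex_auto_out k (\<lambda>i. Bs (Suc i)) (\<lambda>i. rs (Suc i)) Ldom' Luniv Lg) u = None"
    using oa by (intro maplex_None) (auto simp: lex_auto_out_def)
  then show ?thesis using False by (simp add: lex_auto_out_def)
qed

lemma maplex_cong:
  assumes "ordered_alphabet B r" "\<And>x. x \<in> words_of_len B (length u) \<Longrightarrow> g (comb u x) = g' (comb u x)"
  shows "maplex B r g u = maplex B r g' u"
proof -
  have "\<forall>x\<in>set (sorted_enum (lexr r) (words_of_len B (length u))). g (comb u x) = g' (comb u x)"
    using assms(2) set_sorted_enum_words_of_len[OF assms(1)] by simp
  then show ?thesis unfolding maplex_def Let_def by (simp cong: ball_cong map_cong)
qed

lemma lex_auto_data_Suc: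
  assumes oa: "ordered_alphabet B r" and D: "lex_auto_data k (ext_alph A B) Bs rs Ldom' Luniv Lg"
  shows "lex_auto_data (Suc k) A (case_nat B Bs) (case_nat r rs)
    {u \<in> lists A. \<forall>x\<in>words_of_len B (length u). comb u x \<in> Ldom'} Luniv Lg"
    (is "lex_auto_data _ _ ?Bs ?rs ?Ldom _ _")
proof -
  have unique: "\<exists>!\<gamma>. comb_prod u z \<in> Lg \<gamma>"
    if u: "u \<in> ?Ldom" and z: "z \<in> words_of_len (prod_alph (Suc k) ?Bs) (length u)"
      and uz: "comb_prod u z \<in> Luniv" for u z
  proof -
    obtain x y where xy: "x \<in> words_of_len B (length u)" "y \<in> words_of_len (prod_alph k Bs) (length u)"
      "z = map2 (#) x y"
      using z unfolding words_of_len_prod_alph_Suc by auto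
    then have eq: "comb_prod (comb u x) y = comb_prod u z" and "comb u x \<in> Ldom'"
      using comb_prod_comb[of u x y] u by (auto simp: words_of_len_iff)
    moreover have "y \<in> words_of_len (prod_alph k Bs) (length (comb u x))"
      using xy by (simp add: words_of_len_iff)
    ultimately show ?thesis
      using D uz unfolding lex_auto_data_def eq[symmetric] by blast
  qed
  have alph: "ext_alph_prod (ext_alph A B) k Bs = ext_alph_prod A (Suc k) ?Bs"
    using ext_alph_prod_Suc[where Bs = ?Bs] by simp
  show ?thesis
    unfolding lex_auto_data_def
  proof (intro conjI)
    show "\<forall>i<Suc k. ordered_alphabet (?Bs i) (?rs i)"
      using oa D unfolding lex_auto_data_def by (simp add: All_less_Suc2)
    show "regular_on A ?Ldom"
      using D by (intro regular_on_all_extensions) (simp add: lex_auto_data_def)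
    show "regular_on (ext_alph_prod A (Suc k) ?Bs) Luniv" "\<forall>\<gamma>. regular_on (ext_alph_prod A (Suc k) ?Bs) (Lg \<gamma>)"
      using D unfolding lex_auto_data_def alph by blast+
  qed (use unique in blast)
qed

lemma lex_automatic_on_Suc_if_maplex:
  assumes oa: "ordered_alphabet B r" and g: "lex_automatic_on k (ext_alph A B) g"
    and f: "\<forall>u\<in>lists A. f u = maplex B r g u"
  shows "lex_automatic_on (Suc k) A f"
proof -
  obtain Bs rs Ldom' Luniv Lg where D: "lex_auto_data k (ext_alph A B) Bs rs Ldom' Luniv Lg"
    and g_eq: "\<forall>w\<in>lists (ext_alph A B). g w = lex_auto_out k Bs rs Ldom' Luniv Lg w"
    using g unfolding lex_automatic_on_def by blast
  define Ldom where "Ldom = {u \<in> lists A. \<forall>x\<in>words_of_len B (length u). comb u x \<in> Ldom'}"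
  let ?Bs = "case_nat B Bs" and ?rs = "case_nat r rs"
  have D_Suc: "lex_auto_data (Suc k) A ?Bs ?rs Ldom Luniv Lg"
    unfolding Ldom_def using oa D by (rule lex_auto_data_Suc)
  moreover have "f u = lex_auto_out (Suc k) ?Bs ?rs Ldom Luniv Lg u" if "u \<in> lists A" for u
  proof -
    have "f u = maplex B r g u" using f that by blast
    also have "\<dots> = maplex B r (lex_auto_out k Bs rs Ldom' Luniv Lg) u"
      by (rule maplex_cong[OF oa]) (use g_eq comb_in_lists_ext_alph[OF that] in blast)
    also have "\<dots> = lex_auto_out (Suc k) ?Bs ?rs Ldom Luniv Lg u"
    proof -
      have oa_Suc: "\<forall>i<Suc k. ordered_alphabet (?Bs i) (?rs i)"
        using D_Suc unfolding lex_auto_data_def by blast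
      have "u \<in> Ldom \<longleftrightarrow> (\<forall>x\<in>words_of_len (?Bs 0) (length u). comb u x \<in> Ldom')"
        using that by (simp add: Ldom_def)
      from lex_auto_out_Suc[OF oa_Suc this, symmetric] show ?thesis by simp
    qed
    finally show ?thesis .
  qed
  ultimately show ?thesis unfolding lex_automatic_on_def by blast
qed

lemma comp_order_Nil: "\<not> comp_order k rs [] []"
  by (simp add: comp_order_def lexr_def)

lemma lex_auto_out_if_Luniv_subset_Nil:
  assumes "Luniv \<subseteq> {[]}"
  shows "lex_auto_out k Bs rs Ldom Luniv Lg u =
    (if u \<in> Ldom then Some (if u = [] \<and> [] \<in> Luniv then [THE \<gamma>. [] \<in> Lg \<gamma>] else []) else None)"
proof -
  have "comb_prod u z = [] \<longleftrightarrow> u = [] \<and> z = []" if "length z = length u" for z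
    using that by (cases u; cases z) (auto simp: comb_prod_def)
  then have "{z \<in> words_of_len (prod_alph k Bs) (length u). comb_prod u z \<in> Luniv}
      = (if u = [] \<and> [] \<in> Luniv then {[]} else {})"
    using assms by (auto simp: words_of_len_iff)
  then show ?thesis
    unfolding lex_auto_out_def by (simp add: sorted_enum_empty sorted_enum_singleton comp_order_Nil comb_prod_def)
qed

text \<open>If the first ordered alphabet is empty, no nonempty word has a position, so the automata
  for the positions only see the empty word and any other alphabets may be used.\<close>

lemma lex_auto_data_empty_alphabet:
  assumes D: "lex_auto_data (Suc k) A Bs rs Ldom Luniv Lg" and empty: "Bs 0 = {}"
  shows "lex_auto_data (Suc k) A (\<lambda>_. {0}) (\<lambda>_ _ _. False) Ldom Luniv Lg"
    and "lex_auto_out (Suc k) Bs rs Ldom Luniv Lg u = lex_auto_out (Suc k) (\<lambda>_. {0}) (\<lambda>_ _ _. False) Ldom Luniv Lg u"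
proof -
  have "ext_alph_prod A (Suc k) Bs = {}"
    using empty by (auto simp: ext_alph_prod_def prod_alph_iff)
  then have Luniv: "Luniv \<subseteq> {[]}" and Lg: "Lg \<gamma> \<subseteq> {[]}" for \<gamma>
    using D regular_on_subset_lists unfolding lex_auto_data_def by fastforce+
  then show "lex_auto_out (Suc k) Bs rs Ldom Luniv Lg u = lex_auto_out (Suc k) (\<lambda>_. {0}) (\<lambda>_ _ _. False) Ldom Luniv Lg u"
    by (simp add: lex_auto_out_if_Luniv_subset_Nil)
  have Nil_unique: "\<exists>!\<gamma>. [] \<in> Lg \<gamma>" if "[] \<in> Ldom" "[] \<in> Luniv"
    using D that unfolding lex_auto_data_def by (fastforce simp: words_of_len_0 comb_prod_def)
  show "lex_auto_data (Suc k) A (\<lambda>_. {0}) (\<lambda>_ _ _. False) Ldom Luniv Lg"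
    unfolding lex_auto_data_def
  proof (intro conjI allI impI ballI)
    fix u z assume u: "u \<in> Ldom" and z: "z \<in> words_of_len (prod_alph (Suc k) (\<lambda>_. {0})) (length u)"
      and uz: "comb_prod u z \<in> Luniv"
    then have "u = [] \<and> z = []"
      using Luniv by (cases u) (auto simp: words_of_len_iff comb_prod_def)
    then show "\<exists>!\<gamma>. comb_prod u z \<in> Lg \<gamma>"
      using Nil_unique u uz by (simp add: comb_prod_def)
  qed (use D Luniv Lg in \<open>simp_all add: lex_auto_data_def regular_on_subset_Nil ordered_alphabet_def\<close>)
qed

lemma lex_automatic_on_Suc_obtain_nonempty:
  assumes "lex_automatic_on (Suc k) A f"
  obtains Bs rs Ldom Luniv Lg where "lex_auto_data (Suc k) A Bs rs Ldom Luniv Lg"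
    "\<forall>u\<in>lists A. f u = lex_auto_out (Suc k) Bs rs Ldom Luniv Lg u" "Bs 0 \<noteq> {}"
proof -
  obtain Bs rs Ldom Luniv Lg where D: "lex_auto_data (Suc k) A Bs rs Ldom Luniv Lg"
    and f: "\<forall>u\<in>lists A. f u = lex_auto_out (Suc k) Bs rs Ldom Luniv Lg u"
    using assms unfolding lex_automatic_on_def by blast
  show ?thesis
  proof (cases "Bs 0 = {}")
    case True
    then show ?thesis
      using that[of "\<lambda>_. {0}"] D f lex_auto_data_empty_alphabet[OF D] by simp
  next
    case False
    then show ?thesis using that D f by blast
  qed
qed

lemma lex_auto_data_ext_alph:
  assumes D: "lex_auto_data (Suc k) A Bs rs Ldom Luniv Lg"
  shows "lex_auto_data k (ext_alph A (Bs 0)) (\<lambda>i. Bs (Suc i)) (\<lambda>i. rs (Suc i))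
    {w \<in> lists (ext_alph A (Bs 0)). map strip_track w \<in> Ldom} Luniv Lg"
    (is "lex_auto_data _ _ ?Bs _ ?Ldom _ _")
proof -
  have unique: "\<exists>!\<gamma>. comb_prod w y \<in> Lg \<gamma>"
    if w: "w \<in> ?Ldom" and y: "y \<in> words_of_len (prod_alph k ?Bs) (length w)"
      and wy: "comb_prod w y \<in> Luniv" for w y
  proof -
    let ?u = "map strip_track w"
    have "w \<in> lists (ext_alph A (Bs 0))" using w by blast
    then obtain x where x: "x \<in> words_of_len (Bs 0) (length w)" and w_eq: "w = comb ?u x"
      by (rule lists_ext_alph_eq_comb)
    have "map2 (#) x y \<in> words_of_len (prod_alph (Suc k) Bs) (length ?u)"
      using x y unfolding words_of_len_prod_alph_Suc by auto
    moreover have "comb_prod ?u (map2 (#) x y) = comb_prod w y"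
      using x y comb_prod_comb[of ?u x y] w_eq by (simp add: words_of_len_iff)
    moreover have "?u \<in> Ldom" using w by blast
    ultimately show ?thesis using D wy unfolding lex_auto_data_def by metis
  qed
  show ?thesis
    unfolding lex_auto_data_def
  proof (intro conjI allI impI ballI)
    have "regular_on A Ldom" using D unfolding lex_auto_data_def by blast
    then show "regular_on (ext_alph A (Bs 0)) ?Ldom"
      using strip_track_ext_alph by (rule regular_on_vimage)
  qed (use D unique in \<open>simp_all add: lex_auto_data_def ext_alph_prod_Suc\<close>)
qed

lemma maplex_if_lex_automatic_on_Suc:
  assumes "lex_automatic_on (Suc k) A f"
  shows "\<exists>B r g. ordered_alphabet B r \<and> lex_automatic_on k (ext_alph A B) g
           \<and> (\<forall>u\<in>lists A. f u = maplex B r g u)"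
proof -
  obtain Bs rs Ldom Luniv Lg where D: "lex_auto_data (Suc k) A Bs rs Ldom Luniv Lg"
    and f: "\<forall>u\<in>lists A. f u = lex_auto_out (Suc k) Bs rs Ldom Luniv Lg u" and "Bs 0 \<noteq> {}"
    using lex_automatic_on_Suc_obtain_nonempty[OF assms] by blast
  then obtain b where b: "b \<in> Bs 0" by blast
  define Ldom' where "Ldom' = {w \<in> lists (ext_alph A (Bs 0)). map strip_track w \<in> Ldom}"
  let ?g = "lex_auto_out k (\<lambda>i. Bs (Suc i)) (\<lambda>i. rs (Suc i)) Ldom' Luniv Lg"
  have oa: "\<forall>i<Suc k. ordered_alphabet (Bs i) (rs i)" using D unfolding lex_auto_data_def by blast
  have "lex_automatic_on k (ext_alph A (Bs 0)) ?g"
    using lex_auto_data_ext_alph[OF D] unfolding lex_automatic_on_def Ldom'_def by blast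
  moreover have "f u = maplex (Bs 0) (rs 0) ?g u" if u: "u \<in> lists A" for u
  proof -
    have "comb u x \<in> Ldom' \<longleftrightarrow> u \<in> Ldom" if "x \<in> words_of_len (Bs 0) (length u)" for x
      using comb_in_lists_ext_alph[OF u that] map_strip_track_comb[of u x] that
      unfolding Ldom'_def by (simp add: words_of_len_iff)
    moreover have "replicate (length u) b \<in> words_of_len (Bs 0) (length u)"
      using b by (simp add: words_of_len_iff set_replicate_conv_if)
    ultimately have "u \<in> Ldom \<longleftrightarrow> (\<forall>x\<in>words_of_len (Bs 0) (length u). comb u x \<in> Ldom')" by blast
    then show ?thesis using f u lex_auto_out_Suc[OF oa] by simp
  qed
  ultimately show ?thesis using oa by blast
qed

lemma lex_automatic_on_Suc_iff:
  "lex_automatic_on (Suc k) A f \<longleftrightarrow> (\<exists>B r g. ordered_alphabet B r \<and> lex_automatic_on k (ext_alph A B) g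
       \<and> (\<forall>u\<in>lists A. f u = maplex B r g u))"
  using maplex_if_lex_automatic_on_Suc lex_automatic_on_Suc_if_maplex by blast

lemma LexG_iff_lex_automatic_on:
  fixes f :: "('a \<times> nat list) list \<Rightarrow> 'g::finite list option"
  shows "LexG k A f \<longleftrightarrow> lex_automatic_on k A f"
proof (induction k arbitrary: A f)
  case 0
  then show ?case by (simp add: lex_automatic_on_0_iff_simple_trans)
next
  case (Suc k)
  then show ?case by (simp add: lex_automatic_on_Suc_iff)
qed

section \<open>Back to the input alphabet\<close>

lemma lists_base_alph_iff: "w \<in> lists base_alph \<longleftrightarrow> w = map (\<lambda>a. (a, [])) (map fst w)"
  by (induction w) (auto simp: base_alph_def)

lemma ext_alph_prod_base_alph: "ext_alph_prod base_alph k Bs = sig_alph k Bs"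
  by (auto simp: ext_alph_prod_def sig_alph_def base_alph_def)

lemma comb_prod_base_alph: "w \<in> lists base_alph \<Longrightarrow> comb_prod w = zip (map fst w)"
proof (induction w)
  case (Cons p w)
  then show ?case by (cases p) (auto simp: comb_prod_def base_alph_def fun_eq_iff zip_Cons1 split: list.split)
qed (simp add: comb_prod_def fun_eq_iff)

lemma map_fst_mem_image_iff:
  assumes "L \<subseteq> lists base_alph" "w \<in> lists base_alph"
  shows "map fst w \<in> map fst ` L \<longleftrightarrow> w \<in> L"
  using assms lists_base_alph_iff by (metis (no_types, lifting) image_iff subsetD)

lemma image_map_fst_lists_base_alph: "map fst ` {w \<in> lists base_alph. map fst w \<in> L} = L"
proof
  show "L \<subseteq> map fst ` {w \<in> lists base_alph. map fst w \<in> L}"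
  proof
    fix u assume "u \<in> L"
    then show "u \<in> map fst ` {w \<in> lists base_alph. map fst w \<in> L}"
      by (intro image_eqI[of _ _ "map (\<lambda>a. (a, [])) u"]) (auto simp: base_alph_def comp_def)
  qed
qed auto

lemma lex_auto_data_base_alph_iff:
  assumes "Ldom \<subseteq> lists base_alph"
  shows "lex_auto_data k base_alph Bs rs Ldom Luniv Lg \<longleftrightarrow> is_lex_auto_transducer k Bs rs (map fst ` Ldom) Luniv Lg"
proof -
  have "{w \<in> lists base_alph. map fst w \<in> map fst ` Ldom} = Ldom"
    using assms map_fst_mem_image_iff by blast
  then have "regular_on base_alph Ldom \<longleftrightarrow> regular_on UNIV (map fst ` Ldom)"
    using regular_on_image[of base_alph Ldom fst UNIV] regular_on_vimage[of UNIV "map fst ` Ldom" fst base_alph]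
    by auto
  moreover have "comb_prod u = zip (map fst u)" if "u \<in> Ldom" for u
    using assms that comb_prod_base_alph by blast
  then have "(\<forall>u\<in>Ldom. \<forall>z\<in>words_of_len (prod_alph k Bs) (length u).
        comb_prod u z \<in> Luniv \<longrightarrow> (\<exists>!\<gamma>. comb_prod u z \<in> Lg \<gamma>))
    \<longleftrightarrow> (\<forall>u\<in>map fst ` Ldom. \<forall>x\<in>words_of_len (prod_alph k Bs) (length u).
        zip u x \<in> Luniv \<longrightarrow> (\<exists>!\<gamma>. zip u x \<in> Lg \<gamma>))"
    by simp
  ultimately show ?thesis
    unfolding lex_auto_data_def is_lex_auto_transducer_def ext_alph_prod_base_alph by simp
qed

lemma lex_auto_out_base_alph:
  assumes "Ldom \<subseteq> lists base_alph" "w \<in> lists base_alph"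
  shows "lex_auto_out k Bs rs Ldom Luniv Lg w = lex_auto_output k Bs rs (map fst ` Ldom) Luniv Lg (map fst w)"
  unfolding lex_auto_out_def lex_auto_output_def map_fst_mem_image_iff[OF assms]
  using comb_prod_base_alph[OF assms(2)] by simp

lemma lex_automatic_on_base_alph_iff:
  "lex_automatic_on k base_alph (\<lambda>w. f (map fst w)) \<longleftrightarrow> Lex_automatic k f"
proof
  assume "lex_automatic_on k base_alph (\<lambda>w. f (map fst w))"
  then obtain Bs rs Ldom Luniv Lg where D: "lex_auto_data k base_alph Bs rs Ldom Luniv Lg"
    and f: "\<forall>w\<in>lists base_alph. f (map fst w) = lex_auto_out k Bs rs Ldom Luniv Lg w"
    unfolding lex_automatic_on_def by blast
  have dom: "Ldom \<subseteq> lists base_alph"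
    using D regular_on_subset_lists unfolding lex_auto_data_def by blast
  have "f u = lex_auto_output k Bs rs (map fst ` Ldom) Luniv Lg u" for u
  proof -
    let ?w = "map (\<lambda>a. (a, [])) u"
    have "?w \<in> lists base_alph" "map fst ?w = u" by (auto simp: base_alph_def comp_def)
    then show ?thesis using f lex_auto_out_base_alph[OF dom] by metis
  qed
  then show "Lex_automatic k f"
    using D lex_auto_data_base_alph_iff[OF dom] unfolding Lex_automatic_def by blast
next
  assume "Lex_automatic k f"
  then obtain Bs rs Ldom Luniv Lg where T: "is_lex_auto_transducer k Bs rs Ldom Luniv Lg"
    and f: "f = lex_auto_output k Bs rs Ldom Luniv Lg"
    unfolding Lex_automatic_def by blast
  define Ldom' where "Ldom' = {w \<in> lists base_alph. map fst w \<in> Ldom}"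
  have dom: "Ldom' \<subseteq> lists base_alph" unfolding Ldom'_def by blast
  have "map fst ` Ldom' = Ldom"
    unfolding Ldom'_def by (rule image_map_fst_lists_base_alph)
  then have "lex_auto_data k base_alph Bs rs Ldom' Luniv Lg"
    and "\<forall>w\<in>lists base_alph. f (map fst w) = lex_auto_out k Bs rs Ldom' Luniv Lg w"
    by (simp_all add: lex_auto_data_base_alph_iff[OF dom] lex_auto_out_base_alph[OF dom] T f)
  then show "lex_automatic_on k base_alph (\<lambda>w. f (map fst w))"
    unfolding lex_automatic_on_def by blast
qed

theorem mainTheorem5:
  fixes f :: "'a::finite list \<Rightarrow> 'g::finite list option" and k :: nat
  assumes "k \<ge> 1"
  shows "Lex k f \<longleftrightarrow> Lex_automatic k f"
  unfolding Lex_def LexG_iff_lex_automatic_on lex_automatic_on_base_alph_iff ..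

end
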